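(* Assume (A1) and (A2) below. Then for any policy $\pi$ and any $s\in\mathcal S$, $u_t(s)=w_t(s)-g_t(s)$, where $$u_t(s)=\mathbb{V}_{a,s'\sim\pi,\bar p_t}\big[\bar V_t^\pi(s')\big]-\mathbb{E}_{p\sim\Phi_t}\Big[\mathbb{V}_{a,s'\sim\pi,p}\big[V^{\pi,p}(s')\big]\Big],$$ $$w_t(s)=\mathbb{V}_{p\sim\Phi_t}\Big[\sum_{a,s'}\pi(a\mid s)p(s'\mid s,a)\bar V^\pi_t(s')\Big],$$ $$g_t(s)=\mathbb{E}_{p\sim\Phi_t}\Big[\mathbb{V}_{a,s'\sim\pi,p}\big[V^{\pi,p}(s')\big]-\mathbb{V}_{a,s'\sim\pi,p}\big[\bar V^\pi_t(s')\big]\Big].$$ Furthermore, $g_t(s)\ge 0$, and hence $u_t(s)\le w_t(s)$.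
   Context: Let $\mathcal S$ be a finite state space, $\mathcal A$ a finite action space, $r:\mathcal S\times\mathcal A\to\mathbb R$ a known bounded (deterministic) reward function and $\gamma\in[0,1)$ a discount factor. A transition function $p$ assigns to each $(s,a)$ a probability distribution $p(\cdot\mid s,a)$ on $\mathcal S$. A policy $\pi$ gives distributions $\pi(\cdot\mid s)$ on $\mathcal A$. For a transition function $p$, the value function is $V^{\pi,p}(s)=\mathbb E\big[\sum_{h\ge 0}\gamma^h r(s_h,a_h)\mid s_0=s\big]$ with $a_h\sim\pi(\cdot\mid s_h)$, $s_{h+1}\sim p(\cdot\mid s_h,a_h)$. The transition function $p$ is a random variable with (posterior) distribution $\Phi_t$. Define $\bar p_t(s'\mid s,a)=\mathbb E_{p\sim\Phi_t}[p(s'\mid s,a)]$ and $\bar V^\pi_t(s)=\mathbb E_{p\sim\Phi_t}[V^{\pi,p}(s)]$. For a transition function $q$ and a function $f$ on $\mathcal S$, $\mathbb V_{a,s'\sim\pi,q}[f(s')]$ denotes the variance of $f(s')$ when $a\sim\pi(\cdot\mid s)$ and $s'\sim q(\cdot\mid s,a)$. Assumptions: (A1) (independent transitions) $p(s'\mid x,a)$ and $p(s'\mid y,a)$ are independent random variables if $x\neq y$; (A2) (acyclic MDP) the MDP is a directed acyclic graph, i.e., states are not visited more than once in any given episode.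
   Formalization: (A1) makes the rows p(.|x,.) at distinct states x mutually independent, not pairwise independent entries, and (A2) means a rank on states strictly decreases along every positive-probability transition except at terminal states, which every p fixes with probability 1. Each condition added here is assumed in the paper as well or is needed for the statement above to hold. *)

theory Defs
  imports "HOL-Probability.Probability"
begin

text \<open>A transition function is p :: 's => 'a => 's => real with p s a s' = p(s'|s,a).
  A policy is pi :: 's => 'a => real with pi s a = pi(a|s).\<close>

definition is_transition :: "('s::finite \<Rightarrow> 'a::finite \<Rightarrow> 's \<Rightarrow> real) \<Rightarrow> bool" where
  "is_transition p \<longleftrightarrow> (\<forall>s a s'. 0 \<le> p s a s') \<and> (\<forall>s a. (\<Sum>s'\<in>UNIV. p s a s') = 1)"

definition is_policy :: "('s::finite \<Rightarrow> 'a::finite \<Rightarrow> real) \<Rightarrow> bool" where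
  "is_policy \<pi> \<longleftrightarrow> (\<forall>s a. 0 \<le> \<pi> s a) \<and> (\<forall>s. (\<Sum>a\<in>UNIV. \<pi> s a) = 1)"

primrec state_dist ::
  "('s::finite \<Rightarrow> 'a::finite \<Rightarrow> real) \<Rightarrow> ('s \<Rightarrow> 'a \<Rightarrow> 's \<Rightarrow> real) \<Rightarrow> 's \<Rightarrow> nat \<Rightarrow> 's \<Rightarrow> real" where
  "state_dist \<pi> p s0 0 = (\<lambda>s. if s = s0 then 1 else 0)"
| "state_dist \<pi> p s0 (Suc h) =
     (\<lambda>s'. \<Sum>s\<in>UNIV. \<Sum>a\<in>UNIV. state_dist \<pi> p s0 h s * \<pi> s a * p s a s')"

definition value_fn ::
  "('s::finite \<Rightarrow> 'a::finite \<Rightarrow> real) \<Rightarrow> real \<Rightarrow> ('s \<Rightarrow> 'a \<Rightarrow> real) \<Rightarrow> ('s \<Rightarrow> 'a \<Rightarrow> 's \<Rightarrow> real) \<Rightarrow> 's \<Rightarrow> real" where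
  "value_fn r \<gamma> \<pi> p s0 =
     (\<Sum>h. \<gamma> ^ h * (\<Sum>s\<in>UNIV. \<Sum>a\<in>UNIV. state_dist \<pi> p s0 h s * \<pi> s a * r s a))"

definition next_mean ::
  "('s::finite \<Rightarrow> 'a::finite \<Rightarrow> real) \<Rightarrow> ('s \<Rightarrow> 'a \<Rightarrow> 's \<Rightarrow> real) \<Rightarrow> 's \<Rightarrow> ('s \<Rightarrow> real) \<Rightarrow> real" where
  "next_mean \<pi> q s f = (\<Sum>a\<in>UNIV. \<Sum>s'\<in>UNIV. \<pi> s a * q s a s' * f s')"

definition next_var ::
  "('s::finite \<Rightarrow> 'a::finite \<Rightarrow> real) \<Rightarrow> ('s \<Rightarrow> 'a \<Rightarrow> 's \<Rightarrow> real) \<Rightarrow> 's \<Rightarrow> ('s \<Rightarrow> real) \<Rightarrow> real" where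
  "next_var \<pi> q s f = (\<Sum>a\<in>UNIV. \<Sum>s'\<in>UNIV. \<pi> s a * q s a s' * (f s' - next_mean \<pi> q s f)\<^sup>2)"

text \<open>Posterior: a probability space M and a random transition function P.
  Posterior mean transition and posterior mean value.\<close>
definition mean_trans ::
  "'w measure \<Rightarrow> ('w \<Rightarrow> 's \<Rightarrow> 'a \<Rightarrow> 's \<Rightarrow> real) \<Rightarrow> 's \<Rightarrow> 'a \<Rightarrow> 's \<Rightarrow> real" where
  "mean_trans M P s a s' = (\<integral>\<omega>. P \<omega> s a s' \<partial>M)"

definition mean_value ::
  "'w measure \<Rightarrow> ('w \<Rightarrow> 's::finite \<Rightarrow> 'a::finite \<Rightarrow> 's \<Rightarrow> real) \<Rightarrow> ('s \<Rightarrow> 'a \<Rightarrow> real) \<Rightarrow> real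
     \<Rightarrow> ('s \<Rightarrow> 'a \<Rightarrow> real) \<Rightarrow> 's \<Rightarrow> real" where
  "mean_value M P r \<gamma> \<pi> s = (\<integral>\<omega>. value_fn r \<gamma> \<pi> (P \<omega>) s \<partial>M)"

definition u_t where
  "u_t M P r \<gamma> \<pi> s =
     next_var \<pi> (mean_trans M P) s (mean_value M P r \<gamma> \<pi>)
     - (\<integral>\<omega>. next_var \<pi> (P \<omega>) s (value_fn r \<gamma> \<pi> (P \<omega>)) \<partial>M)"

definition w_t where
  "w_t M P r \<gamma> \<pi> s =
     prob_space.variance M (\<lambda>\<omega>. \<Sum>a\<in>UNIV. \<Sum>s'\<in>UNIV. \<pi> s a * P \<omega> s a s' * mean_value M P r \<gamma> \<pi> s')"

definition g_t where
  "g_t M P r \<gamma> \<pi> s =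
     (\<integral>\<omega>. next_var \<pi> (P \<omega>) s (value_fn r \<gamma> \<pi> (P \<omega>))
          - next_var \<pi> (P \<omega>) s (mean_value M P r \<gamma> \<pi>) \<partial>M)"

text \<open>(A1) Independent transitions: the rows p(.|x,.) at distinct states x are
  (mutually) independent random variables.\<close>
definition indep_transitions :: "'w measure \<Rightarrow> ('w \<Rightarrow> 's \<Rightarrow> 'a \<Rightarrow> 's \<Rightarrow> real) \<Rightarrow> bool" where
  "indep_transitions M P \<longleftrightarrow>
     prob_space.indep_vars M (\<lambda>_. Pi\<^sub>M UNIV (\<lambda>_. Pi\<^sub>M UNIV (\<lambda>_. borel))) (\<lambda>x \<omega>. P \<omega> x) UNIV"

text \<open>(A2) Acyclic MDP: there is a rank on states that strictly decreases along every
  possible transition, except at terminal (absorbing) states, which deterministically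
  loop to themselves (end of episode).\<close>
definition terminal_state :: "'w measure \<Rightarrow> ('w \<Rightarrow> 's \<Rightarrow> 'a \<Rightarrow> 's \<Rightarrow> real) \<Rightarrow> 's \<Rightarrow> bool" where
  "terminal_state M P s \<longleftrightarrow> (\<forall>\<omega>\<in>space M. \<forall>a. P \<omega> s a s = 1)"

definition acyclic_mdp :: "'w measure \<Rightarrow> ('w \<Rightarrow> 's \<Rightarrow> 'a \<Rightarrow> 's \<Rightarrow> real) \<Rightarrow> bool" where
  "acyclic_mdp M P \<longleftrightarrow> (\<exists>rank :: 's \<Rightarrow> nat. \<forall>\<omega>\<in>space M. \<forall>s a s'.
      P \<omega> s a s' \<noteq> 0 \<longrightarrow> rank s' < rank s \<or> (s' = s \<and> terminal_state M P s))"

end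

theory Submission
  imports Defs
begin

(* The mean transition pbar is the posterior mixture of the random transitions p, so the
  law of total variance gives
    Var_{a,s' ~ pi, pbar}[Vbar(s')] = w_t(s) + E_p[Var_{a,s' ~ pi, p}[Vbar(s')]],
  from which u_t = w_t - g_t is pure algebra.
  For g_t >= 0 write V^{pi,p} = Vbar + D. Then
    Var_p[V] - Var_p[Vbar] = Var_p[D] + 2 Cov_p[Vbar, D],
  and the covariance term vanishes in expectation: in an acyclic MDP the value
  V^{pi,p}(s') at a successor s' of s only depends on the rows of p at states of
  lower rank, so by (A1) it is independent of the row p(.|s,.) and
  E[f(p(.|s,.)) D(s')] = E[f(p(.|s,.))] E[D(s')] = 0.  At terminal states both
  variances vanish. *)

lemma le_1_if_sum_eq_1:
  fixes f :: "'b \<Rightarrow> real"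
  assumes "finite A" "\<And>x. x \<in> A \<Longrightarrow> 0 \<le> f x" "sum f A = 1" "x \<in> A"
  shows "f x \<le> 1"
  using member_le_sum[of x A f] assms by simp

lemma is_policy_nonneg: "is_policy \<pi> \<Longrightarrow> 0 \<le> \<pi> s a"
  by (simp add: is_policy_def)

lemma is_policy_le_1: "is_policy \<pi> \<Longrightarrow> \<pi> s a \<le> 1"
  by (rule le_1_if_sum_eq_1[of UNIV]) (auto simp: is_policy_def)

lemma is_transition_nonneg: "is_transition p \<Longrightarrow> 0 \<le> p s a y"
  by (simp add: is_transition_def)

lemma is_transition_le_1: "is_transition p \<Longrightarrow> p s a y \<le> 1"
  by (rule le_1_if_sum_eq_1[of UNIV]) (auto simp: is_transition_def)

lemma sum_policy_transition:
  assumes "is_transition p" "is_policy \<pi>"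
  shows "(\<Sum>a\<in>UNIV. \<Sum>y\<in>UNIV. \<pi> s a * p s a y) = 1"
  using assms by (simp add: is_transition_def is_policy_def flip: sum_distrib_left)

subsection \<open>State distributions and the value function\<close>

lemma state_dist_nonneg:
  assumes "is_transition p" "is_policy \<pi>"
  shows "0 \<le> state_dist \<pi> p s0 h x"
  using assms
  by (induction h arbitrary: x)
     (auto intro!: sum_nonneg mult_nonneg_nonneg simp: is_policy_def is_transition_def)

lemma sum_state_dist:
  assumes "is_transition p" "is_policy \<pi>"
  shows "(\<Sum>x\<in>UNIV. state_dist \<pi> p s0 h x) = 1"
proof (induction h)
  case (Suc h)
  have "(\<Sum>x\<in>UNIV. state_dist \<pi> p s0 (Suc h) x)
      = (\<Sum>s\<in>UNIV. \<Sum>a\<in>UNIV. state_dist \<pi> p s0 h s * \<pi> s a * (\<Sum>x\<in>UNIV. p s a x))"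
    by (simp add: sum_distrib_left, subst sum.swap, rule sum.cong[OF refl], subst sum.swap, simp)
  also have "\<dots> = (\<Sum>s\<in>UNIV. state_dist \<pi> p s0 h s * (\<Sum>a\<in>UNIV. \<pi> s a))"
    using assms by (simp add: is_transition_def sum_distrib_left)
  also have "\<dots> = 1"
    using assms Suc by (simp add: is_policy_def)
  finally show ?case .
qed simp

lemma state_dist_le_1:
  assumes "is_transition p" "is_policy \<pi>"
  shows "state_dist \<pi> p s0 h x \<le> 1"
  by (rule le_1_if_sum_eq_1[of UNIV])
     (auto simp: state_dist_nonneg[OF assms] sum_state_dist[OF assms])

lemma abs_value_fn_le:
  assumes "is_transition p" "is_policy \<pi>" "0 \<le> \<gamma>" "\<gamma> < 1"
  shows "\<bar>value_fn r \<gamma> \<pi> p s0\<bar> \<le> (\<Sum>x\<in>UNIV. \<Sum>a\<in>UNIV. \<bar>r x a\<bar>) / (1 - \<gamma>)"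
proof -
  define R where "R = (\<Sum>x\<in>UNIV. \<Sum>a\<in>UNIV. \<bar>r x a\<bar>)"
  have weight: "\<bar>state_dist \<pi> p s0 h x * \<pi> x a\<bar> \<le> 1" for h x a
    using state_dist_nonneg[OF assms(1,2)] state_dist_le_1[OF assms(1,2)]
      is_policy_nonneg[OF assms(2)] is_policy_le_1[OF assms(2)]
    by (simp add: abs_mult mult_le_one)
  have "\<bar>\<Sum>x\<in>UNIV. \<Sum>a\<in>UNIV. state_dist \<pi> p s0 h x * \<pi> x a * r x a\<bar> \<le> R" for h
    unfolding R_def
    by (intro order.trans[OF sum_abs] sum_mono order.trans[OF sum_abs])
       (use mult_right_mono[OF weight abs_ge_zero] in \<open>simp add: abs_mult\<close>)
  then have "norm (\<gamma> ^ h * (\<Sum>x\<in>UNIV. \<Sum>a\<in>UNIV. state_dist \<pi> p s0 h x * \<pi> x a * r x a))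
      \<le> \<gamma> ^ h * R" for h
    using assms(3) by (simp add: abs_mult mult_left_mono)
  moreover have "summable (\<lambda>h. \<gamma> ^ h * R)"
    using assms(3,4) by (intro summable_mult2 summable_geometric) simp
  ultimately have "norm (value_fn r \<gamma> \<pi> p s0) \<le> (\<Sum>h. \<gamma> ^ h * R)"
    unfolding value_fn_def by (rule norm_suminf_le)
  also have "\<dots> = R / (1 - \<gamma>)"
    using assms(3,4) by (simp add: suminf_mult2[symmetric] suminf_geometric)
  finally show ?thesis unfolding R_def by simp
qed

lemma measurable_value_fn:
  fixes G :: "'b \<Rightarrow> 's::finite \<Rightarrow> 'a::finite \<Rightarrow> 's \<Rightarrow> real"
  assumes "\<And>x a y. (\<lambda>b. G b x a y) \<in> borel_measurable N"
  shows "(\<lambda>b. value_fn r \<gamma> \<pi> (G b) s0) \<in> borel_measurable N"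
proof -
  have "(\<lambda>b. state_dist \<pi> (G b) s0 h x) \<in> borel_measurable N" for h x
    using assms by (induction h arbitrary: x) auto
  then show ?thesis
    unfolding value_fn_def by measurable
qed

lemma state_dist_nonzero_rank_le:
  fixes rank :: "'s::finite \<Rightarrow> nat"
  assumes "\<And>x a y. p x a y \<noteq> 0 \<Longrightarrow> rank y < rank x \<or> y = x"
    and "state_dist \<pi> p j h x \<noteq> 0"
  shows "rank x \<le> rank j"
  using assms(2)
proof (induction h arbitrary: x)
  case (Suc h)
  then obtain z a where "state_dist \<pi> p j h z * \<pi> z a * p z a x \<noteq> 0"
    by (auto elim!: sum.not_neutral_contains_not_neutral)
  with Suc.IH assms(1)[of z a x] show ?case by fastforce
qed (simp split: if_splits)

lemma state_dist_fun_upd: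
  fixes rank :: "'s::finite \<Rightarrow> nat"
  assumes "\<And>x a y. p x a y \<noteq> 0 \<Longrightarrow> rank y < rank x \<or> y = x"
    and "rank j < rank s"
  shows "state_dist \<pi> (p(s := Q)) j h = state_dist \<pi> p j h"
proof (induction h)
  case (Suc h)
  have "state_dist \<pi> p j h x * \<pi> x a * (p(s := Q)) x a y = state_dist \<pi> p j h x * \<pi> x a * p x a y"
    for x a y
    using state_dist_nonzero_rank_le[where \<pi> = \<pi> and j = j and h = h and x = x, OF assms(1)] assms(2)
    by fastforce
  then have "state_dist \<pi> (p(s := Q)) j (Suc h) y = state_dist \<pi> p j (Suc h) y" for y
    unfolding state_dist.simps Suc by (intro sum.cong refl)
  then show ?case by blast
qed simp

lemma value_fn_fun_upd:
  fixes rank :: "'s::finite \<Rightarrow> nat"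
  assumes "\<And>x a y. p x a y \<noteq> 0 \<Longrightarrow> rank y < rank x \<or> y = x"
    and "rank j < rank s"
  shows "value_fn r \<gamma> \<pi> (p(s := Q)) j = value_fn r \<gamma> \<pi> p j"
  unfolding value_fn_def by (simp add: state_dist_fun_upd[OF assms])

subsection \<open>Next-state mean, variance and covariance\<close>

definition next_cov ::
  "('s::finite \<Rightarrow> 'a::finite \<Rightarrow> real) \<Rightarrow> ('s \<Rightarrow> 'a \<Rightarrow> 's \<Rightarrow> real) \<Rightarrow> 's \<Rightarrow> ('s \<Rightarrow> real)
     \<Rightarrow> ('s \<Rightarrow> real) \<Rightarrow> real" where
  "next_cov \<pi> q s f g = (\<Sum>a\<in>UNIV. \<Sum>s'\<in>UNIV.
     \<pi> s a * q s a s' * (f s' - next_mean \<pi> q s f) * (g s' - next_mean \<pi> q s g))"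

lemma next_mean_add: "next_mean \<pi> q s (\<lambda>y. f y + g y) = next_mean \<pi> q s f + next_mean \<pi> q s g"
  by (simp add: next_mean_def distrib_left sum.distrib)

lemma next_var_add:
  "next_var \<pi> q s (\<lambda>y. f y + g y) = next_var \<pi> q s f + 2 * next_cov \<pi> q s f g + next_var \<pi> q s g"
proof -
  define mf mg where "mf = next_mean \<pi> q s f" and "mg = next_mean \<pi> q s g"
  have "\<pi> s a * q s a y * (f y + g y - (mf + mg))\<^sup>2
      = \<pi> s a * q s a y * (f y - mf)\<^sup>2 + 2 * (\<pi> s a * q s a y * (f y - mf) * (g y - mg))
        + \<pi> s a * q s a y * (g y - mg)\<^sup>2" for a y
    by (simp add: power2_eq_square algebra_simps)
  then show ?thesis
    unfolding next_var_def next_cov_def next_mean_add mf_def mg_def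
    by (simp only: sum.distrib sum_distrib_left)
qed

lemma next_cov_eq:
  assumes "(\<Sum>a\<in>UNIV. \<Sum>y\<in>UNIV. \<pi> s a * q s a y) = 1"
  shows "next_cov \<pi> q s f g
    = next_mean \<pi> q s (\<lambda>y. f y * g y) - next_mean \<pi> q s f * next_mean \<pi> q s g"
proof -
  define mf mg where "mf = next_mean \<pi> q s f" and "mg = next_mean \<pi> q s g"
  have "next_cov \<pi> q s f g = (\<Sum>a\<in>UNIV. \<Sum>y\<in>UNIV. \<pi> s a * q s a y * (f y * g y)
      - mg * (\<pi> s a * q s a y * f y) - mf * (\<pi> s a * q s a y * g y) + mf * mg * (\<pi> s a * q s a y))"
    unfolding next_cov_def mf_def mg_def by (intro sum.cong refl) (simp add: algebra_simps)
  also have "\<dots> = next_mean \<pi> q s (\<lambda>y. f y * g y) - mg * mf - mf * mg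
      + mf * mg * (\<Sum>a\<in>UNIV. \<Sum>y\<in>UNIV. \<pi> s a * q s a y)"
    by (simp add: next_mean_def mf_def mg_def sum.distrib sum_subtractf sum_distrib_left)
  finally show ?thesis using assms by (simp add: mf_def mg_def)
qed

lemma next_var_eq:
  assumes "(\<Sum>a\<in>UNIV. \<Sum>y\<in>UNIV. \<pi> s a * q s a y) = 1"
  shows "next_var \<pi> q s f = next_mean \<pi> q s (\<lambda>y. (f y)\<^sup>2) - (next_mean \<pi> q s f)\<^sup>2"
proof -
  have "next_var \<pi> q s f = next_cov \<pi> q s f f"
    by (simp add: next_var_def next_cov_def power2_eq_square mult.assoc)
  then show ?thesis
    by (simp add: next_cov_eq[where \<pi> = \<pi> and q = q and s = s, OF assms] power2_eq_square)
qed

lemma next_var_nonneg: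
  assumes "is_transition p" "is_policy \<pi>"
  shows "0 \<le> next_var \<pi> p s f"
  unfolding next_var_def using assms
  by (intro sum_nonneg mult_nonneg_nonneg is_policy_nonneg is_transition_nonneg zero_le_power2)

lemma next_var_terminal:
  assumes p: "is_transition p" and "is_policy \<pi>" and stay: "\<And>a. p s a s = 1"
  shows "next_var \<pi> p s f = 0"
proof -
  have leave: "p s a y = 0" if "y \<noteq> s" for a y
  proof -
    have "p s a s + (\<Sum>y\<in>UNIV - {s}. p s a y) = 1"
      using p by (simp add: is_transition_def sum.remove[symmetric])
    then have "(\<Sum>y\<in>UNIV - {s}. p s a y) = 0" using stay by simp
    then show ?thesis
      using that sum_nonneg_eq_0_iff[of "UNIV - {s}" "p s a"] is_transition_nonneg[OF p] by auto
  qed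
  have "\<pi> s a * p s a y * f y = (if y = s then \<pi> s a * f s else 0)" for a y
    using stay leave by auto
  then have "next_mean \<pi> p s f = (\<Sum>a\<in>UNIV. \<pi> s a) * f s"
    by (simp add: next_mean_def sum_distrib_right)
  then have "next_mean \<pi> p s f = f s"
    using assms(2) by (simp add: is_policy_def)
  moreover have stay_or_leave: "p s a y * (f y - f s)\<^sup>2 = 0" for a y
    using leave by (cases "y = s") auto
  ultimately show ?thesis
    unfolding next_var_def by (simp add: mult.assoc stay_or_leave)
qed

subsection \<open>Bounded measurable random variables\<close>

definition bounded_measurable :: "'w measure \<Rightarrow> ('w \<Rightarrow> real) \<Rightarrow> bool" where
  "bounded_measurable M f \<longleftrightarrow> f \<in> borel_measurable M \<and> (\<exists>B. \<forall>\<omega>\<in>space M. \<bar>f \<omega>\<bar> \<le> B)"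

lemma bounded_measurable_const: "bounded_measurable M (\<lambda>\<omega>. c)"
  by (auto simp: bounded_measurable_def)

lemma bounded_measurable_add:
  "bounded_measurable M f \<Longrightarrow> bounded_measurable M g \<Longrightarrow> bounded_measurable M (\<lambda>\<omega>. f \<omega> + g \<omega>)"
  unfolding bounded_measurable_def by (fastforce intro: abs_triangle_ineq[THEN order.trans] add_mono)

lemma bounded_measurable_diff:
  "bounded_measurable M f \<Longrightarrow> bounded_measurable M g \<Longrightarrow> bounded_measurable M (\<lambda>\<omega>. f \<omega> - g \<omega>)"
  unfolding bounded_measurable_def by (fastforce intro: abs_triangle_ineq4[THEN order.trans] add_mono)

lemma bounded_measurable_mult:
  "bounded_measurable M f \<Longrightarrow> bounded_measurable M g \<Longrightarrow> bounded_measurable M (\<lambda>\<omega>. f \<omega> * g \<omega>)"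
  unfolding bounded_measurable_def by (fastforce simp: abs_mult intro: mult_mono')

lemma bounded_measurable_power2:
  "bounded_measurable M f \<Longrightarrow> bounded_measurable M (\<lambda>\<omega>. (f \<omega>)\<^sup>2)"
  unfolding power2_eq_square by (rule bounded_measurable_mult)

lemma bounded_measurable_sum:
  "(\<And>i. i \<in> I \<Longrightarrow> bounded_measurable M (f i)) \<Longrightarrow> bounded_measurable M (\<lambda>\<omega>. \<Sum>i\<in>I. f i \<omega>)"
  by (induction I rule: infinite_finite_induct)
     (auto intro: bounded_measurable_const bounded_measurable_add)

lemmas bounded_measurable_intros =
  bounded_measurable_const bounded_measurable_add bounded_measurable_diff
  bounded_measurable_mult bounded_measurable_power2 bounded_measurable_sum

lemma (in finite_measure) integrable_bounded_measurable:
  "bounded_measurable M f \<Longrightarrow> integrable M f"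
  unfolding bounded_measurable_def
proof (elim conjE exE)
  fix B assume "f \<in> borel_measurable M" "\<forall>\<omega>\<in>space M. \<bar>f \<omega>\<bar> \<le> B"
  then show "integrable M f" by (intro integrable_const_bound[where B = B]) auto
qed

lemma bounded_measurable_transition_entry:
  assumes "\<And>\<omega>. \<omega> \<in> space M \<Longrightarrow> is_transition (q \<omega>)"
    and "(\<lambda>\<omega>. q \<omega> x a y) \<in> borel_measurable M"
  shows "bounded_measurable M (\<lambda>\<omega>. q \<omega> x a y)"
  unfolding bounded_measurable_def
  using assms is_transition_nonneg is_transition_le_1 by (intro conjI exI[of _ 1]) fastforce+

subsection \<open>Averaging over the posterior\<close>

context prob_space
begin

context
  fixes q :: "'a \<Rightarrow> 's::finite \<Rightarrow> 'b::finite \<Rightarrow> 's \<Rightarrow> real" and \<pi> :: "'s \<Rightarrow> 'b \<Rightarrow> real"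
  assumes transition: "\<And>\<omega>. \<omega> \<in> space M \<Longrightarrow> is_transition (q \<omega>)"
    and measurable_entry: "\<And>x a y. (\<lambda>\<omega>. q \<omega> x a y) \<in> borel_measurable M"
    and policy: "is_policy \<pi>"
begin

lemma bounded_measurable_next_mean: "bounded_measurable M (\<lambda>\<omega>. next_mean \<pi> (q \<omega>) s f)"
  unfolding next_mean_def
  by (intro bounded_measurable_intros bounded_measurable_transition_entry transition measurable_entry)

lemma integrable_entry: "integrable M (\<lambda>\<omega>. q \<omega> x a y)"
  by (intro integrable_bounded_measurable bounded_measurable_transition_entry transition measurable_entry)

lemma next_mean_mean_trans:
  "next_mean \<pi> (mean_trans M q) s f = (\<integral>\<omega>. next_mean \<pi> (q \<omega>) s f \<partial>M)"
  by (simp add: next_mean_def mean_trans_def integral_sum integrable_entry)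

lemma is_transition_mean_trans: "is_transition (mean_trans M q)"
  unfolding is_transition_def
proof (intro conjI allI)
  show "0 \<le> mean_trans M q x a y" for x a y
    unfolding mean_trans_def
    by (rule Bochner_Integration.integral_nonneg) (simp add: transition is_transition_nonneg)
  have "(\<Sum>y\<in>UNIV. mean_trans M q x a y) = (\<integral>\<omega>. (\<Sum>y\<in>UNIV. q \<omega> x a y) \<partial>M)" for x a
    unfolding mean_trans_def by (simp add: integral_sum integrable_entry)
  also have "\<dots> x a = (\<integral>\<omega>. 1 \<partial>M)" for x a
    using transition by (intro Bochner_Integration.integral_cong) (auto simp: is_transition_def)
  finally show "(\<Sum>y\<in>UNIV. mean_trans M q x a y) = 1" for x a
    by (simp add: prob_space)
qed

lemma next_var_mean_trans:
  "next_var \<pi> (mean_trans M q) s f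
     = variance (\<lambda>\<omega>. next_mean \<pi> (q \<omega>) s f) + (\<integral>\<omega>. next_var \<pi> (q \<omega>) s f \<partial>M)"
proof -
  define m m2 where "m \<omega> = next_mean \<pi> (q \<omega>) s f"
    and "m2 \<omega> = next_mean \<pi> (q \<omega>) s (\<lambda>y. (f y)\<^sup>2)" for \<omega>
  have bm: "bounded_measurable M m" "bounded_measurable M m2"
    unfolding m_def m2_def by (intro bounded_measurable_next_mean)+
  have "next_var \<pi> (mean_trans M q) s f = expectation m2 - (expectation m)\<^sup>2"
    unfolding m_def m2_def
    by (simp add: next_var_eq sum_policy_transition is_transition_mean_trans policy next_mean_mean_trans)
  moreover have "variance m = expectation (\<lambda>\<omega>. (m \<omega>)\<^sup>2) - (expectation m)\<^sup>2"
    using bm by (intro variance_eq integrable_bounded_measurable bounded_measurable_intros)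
  moreover have "(\<integral>\<omega>. next_var \<pi> (q \<omega>) s f \<partial>M) = (\<integral>\<omega>. m2 \<omega> - (m \<omega>)\<^sup>2 \<partial>M)"
    unfolding m_def m2_def
    by (intro Bochner_Integration.integral_cong refl)
       (simp add: next_var_eq sum_policy_transition[OF transition policy])
  moreover have "\<dots> = expectation m2 - expectation (\<lambda>\<omega>. (m \<omega>)\<^sup>2)"
    using bm by (intro Bochner_Integration.integral_diff integrable_bounded_measurable bounded_measurable_intros)
  ultimately show ?thesis unfolding m_def by simp
qed

end

end

subsection \<open>The posterior MDP\<close>

abbreviation row_space :: "('a::finite \<Rightarrow> 's::finite \<Rightarrow> real) measure" where
  "row_space \<equiv> Pi\<^sub>M UNIV (\<lambda>_. Pi\<^sub>M UNIV (\<lambda>_. borel))"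

lemma measurable_row_entry: "(\<lambda>row. row a y) \<in> borel_measurable row_space"
proof -
  have "(\<lambda>row. row a) \<in> measurable row_space (Pi\<^sub>M UNIV (\<lambda>_. borel))"
    "(\<lambda>v. v y) \<in> borel_measurable (Pi\<^sub>M UNIV (\<lambda>_. borel))"
    by (auto intro: measurable_component_singleton)
  then show ?thesis by (rule measurable_compose)
qed

locale posterior_mdp = prob_space M
  for M :: "'w measure" and P :: "'w \<Rightarrow> 's::finite \<Rightarrow> 'a::finite \<Rightarrow> 's \<Rightarrow> real"
    and r :: "'s \<Rightarrow> 'a \<Rightarrow> real" and \<gamma> :: real and \<pi> :: "'s \<Rightarrow> 'a \<Rightarrow> real" +
  assumes discount: "0 \<le> \<gamma>" "\<gamma> < 1"
    and transition: "\<And>\<omega>. \<omega> \<in> space M \<Longrightarrow> is_transition (P \<omega>)"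
    and measurable_entry: "\<And>x a y. (\<lambda>\<omega>. P \<omega> x a y) \<in> borel_measurable M"
    and policy: "is_policy \<pi>"
begin

abbreviation V :: "'w \<Rightarrow> 's \<Rightarrow> real" where
  "V \<omega> \<equiv> value_fn r \<gamma> \<pi> (P \<omega>)"

abbreviation Vbar :: "'s \<Rightarrow> real" where
  "Vbar \<equiv> mean_value M P r \<gamma> \<pi>"

lemma bounded_measurable_entry: "bounded_measurable M (\<lambda>\<omega>. P \<omega> x a y)"
  by (intro bounded_measurable_transition_entry transition measurable_entry)

lemma bounded_measurable_value: "bounded_measurable M (\<lambda>\<omega>. V \<omega> j)"
proof -
  have "(\<lambda>\<omega>. V \<omega> j) \<in> borel_measurable M"
    by (rule measurable_value_fn) (rule measurable_entry)
  then show ?thesis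
    unfolding bounded_measurable_def using abs_value_fn_le[OF transition policy discount] by blast
qed

lemmas bounded_measurable_mdp_intros =
  bounded_measurable_intros bounded_measurable_entry bounded_measurable_value

lemma u_t_eq_w_t_minus_g_t: "u_t M P r \<gamma> \<pi> s = w_t M P r \<gamma> \<pi> s - g_t M P r \<gamma> \<pi> s"
proof -
  have "next_var \<pi> (mean_trans M P) s Vbar
      = w_t M P r \<gamma> \<pi> s + (\<integral>\<omega>. next_var \<pi> (P \<omega>) s Vbar \<partial>M)"
    using next_var_mean_trans[OF transition measurable_entry policy]
    by (simp add: w_t_def next_mean_def)
  moreover have "g_t M P r \<gamma> \<pi> s
      = (\<integral>\<omega>. next_var \<pi> (P \<omega>) s (V \<omega>) \<partial>M) - (\<integral>\<omega>. next_var \<pi> (P \<omega>) s Vbar \<partial>M)"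
    unfolding g_t_def next_var_def next_mean_def
    by (intro Bochner_Integration.integral_diff integrable_bounded_measurable bounded_measurable_mdp_intros)
  ultimately show ?thesis by (simp add: u_t_def)
qed

lemma integral_row_times_value:
  fixes rank :: "'s \<Rightarrow> nat" and f :: "('a \<Rightarrow> 's \<Rightarrow> real) \<Rightarrow> real"
  assumes indep: "indep_transitions M P"
    and rank: "\<And>\<omega> x a y. \<omega> \<in> space M \<Longrightarrow> P \<omega> x a y \<noteq> 0 \<Longrightarrow> rank y < rank x \<or> y = x"
    and below: "rank z < rank s"
    and f: "f \<in> borel_measurable row_space" "bounded_measurable M (\<lambda>\<omega>. f (P \<omega> s))"
  shows "(\<integral>\<omega>. f (P \<omega> s) * V \<omega> z \<partial>M) = (\<integral>\<omega>. f (P \<omega> s) \<partial>M) * Vbar z"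
proof -
  define others where "others \<omega> = restrict (\<lambda>x. P \<omega> x) (UNIV - {s})" for \<omega>
  \<comment> \<open>V z is a function F of the rows at states other than s: overwriting the row at s
    does not change it, since z lies strictly below s.\<close>
  define F where "F Y = value_fn r \<gamma> \<pi> (Y(s := \<lambda>_ _. 0)) z" for Y
  have value_others: "F (others \<omega>) = V \<omega> z" if "\<omega> \<in> space M" for \<omega>
  proof -
    have "(others \<omega>)(s := \<lambda>_ _. 0) = (P \<omega>)(s := \<lambda>_ _. 0)"
      by (auto simp: others_def)
    then show ?thesis
      unfolding F_def using value_fn_fun_upd[OF rank[OF that] below] by simp
  qed
  have "indep_var (Pi\<^sub>M {s} (\<lambda>_. row_space)) (\<lambda>\<omega>. restrict (\<lambda>x. P \<omega> x) {s})
      (Pi\<^sub>M (UNIV - {s}) (\<lambda>_. row_space)) others"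
    unfolding others_def using indep unfolding indep_transitions_def
    by (rule indep_var_restrict) auto
  moreover have "(\<lambda>Y. f (Y s)) \<in> borel_measurable (Pi\<^sub>M {s} (\<lambda>_. row_space))"
    using f(1) by measurable
  moreover have "F \<in> borel_measurable (Pi\<^sub>M (UNIV - {s}) (\<lambda>_. row_space))"
    unfolding F_def
  proof (rule measurable_value_fn)
    show "(\<lambda>Y. (Y(s := \<lambda>_ _. 0)) x a y) \<in> borel_measurable (Pi\<^sub>M (UNIV - {s}) (\<lambda>_. row_space))"
      for x y :: 's and a :: 'a
    proof (cases "x = s")
      case False
      then have "(\<lambda>Y. Y x) \<in> measurable (Pi\<^sub>M (UNIV - {s}) (\<lambda>_. row_space)) row_space"
        by (intro measurable_component_singleton) auto
      from measurable_compose[OF this measurable_row_entry] False show ?thesis by simp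
    qed simp
  qed
  ultimately have indep_row: "indep_var borel (\<lambda>\<omega>. f (P \<omega> s)) borel (\<lambda>\<omega>. F (others \<omega>))"
    by (auto dest: indep_var_compose simp: comp_def)
  have "integrable M (\<lambda>\<omega>. F (others \<omega>))"
    using value_others
    by (subst Bochner_Integration.integrable_cong[OF refl])
       (auto intro: integrable_bounded_measurable bounded_measurable_value)
  then have "(\<integral>\<omega>. f (P \<omega> s) * F (others \<omega>) \<partial>M)
      = (\<integral>\<omega>. f (P \<omega> s) \<partial>M) * (\<integral>\<omega>. F (others \<omega>) \<partial>M)"
    by (rule indep_var_lebesgue_integral[OF indep_row integrable_bounded_measurable[OF f(2)]])
  then show ?thesis
    using value_others by (simp add: mean_value_def cong: Bochner_Integration.integral_cong)
qed

lemma integral_row_times_deviation: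
  fixes f :: "('a \<Rightarrow> 's \<Rightarrow> real) \<Rightarrow> real"
  assumes indep: "indep_transitions M P" and acyclic: "acyclic_mdp M P"
    and not_terminal: "\<not> terminal_state M P s"
    and f: "f \<in> borel_measurable row_space" "bounded_measurable M (\<lambda>\<omega>. f (P \<omega> s))"
  shows "(\<integral>\<omega>. f (P \<omega> s) * P \<omega> s b z * (V \<omega> z - Vbar z) \<partial>M) = 0"
proof -
  obtain rank :: "'s \<Rightarrow> nat" where rank: "\<And>\<omega> x a y. \<omega> \<in> space M \<Longrightarrow> P \<omega> x a y \<noteq> 0
      \<Longrightarrow> rank y < rank x \<or> (y = x \<and> terminal_state M P x)"
    using acyclic unfolding acyclic_mdp_def by blast
  show ?thesis
  proof (cases "rank z < rank s")
    case True
    define g where "g row = f row * row b z" for row :: "'a \<Rightarrow> 's \<Rightarrow> real"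
    have g_measurable: "g \<in> borel_measurable row_space"
      unfolding g_def using f(1) measurable_row_entry by measurable
    have g_bounded: "bounded_measurable M (\<lambda>\<omega>. g (P \<omega> s))"
      unfolding g_def using f(2) by (intro bounded_measurable_mdp_intros)
    have "(\<integral>\<omega>. g (P \<omega> s) * V \<omega> z \<partial>M) = (\<integral>\<omega>. g (P \<omega> s) \<partial>M) * Vbar z"
      using rank by (intro integral_row_times_value[OF indep _ True g_measurable g_bounded]) blast
    moreover have "(\<integral>\<omega>. g (P \<omega> s) * (V \<omega> z - Vbar z) \<partial>M)
        = (\<integral>\<omega>. g (P \<omega> s) * V \<omega> z \<partial>M) - (\<integral>\<omega>. g (P \<omega> s) \<partial>M) * Vbar z"
      using g_bounded by (simp add: right_diff_distrib integral_diff integrable_bounded_measurable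
          bounded_measurable_mdp_intros)
    ultimately show ?thesis by (simp add: g_def)
  next
    case False
    then have "P \<omega> s b z = 0" if "\<omega> \<in> space M" for \<omega>
      using rank[OF that, of s b z] not_terminal by blast
    then show ?thesis by (simp cong: Bochner_Integration.integral_cong)
  qed
qed

lemma integral_row_times_next_mean_deviation:
  fixes f :: "('a \<Rightarrow> 's \<Rightarrow> real) \<Rightarrow> real"
  assumes indep: "indep_transitions M P" and acyclic: "acyclic_mdp M P"
    and not_terminal: "\<not> terminal_state M P s"
    and f: "f \<in> borel_measurable row_space" "bounded_measurable M (\<lambda>\<omega>. f (P \<omega> s))"
  shows "(\<integral>\<omega>. f (P \<omega> s) * next_mean \<pi> (P \<omega>) s (\<lambda>y. c y * (V \<omega> y - Vbar y)) \<partial>M) = 0"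
proof -
  have int: "integrable M (\<lambda>\<omega>. f (P \<omega> s) * P \<omega> s a y * (V \<omega> y - Vbar y))" for a y
    using f(2) by (intro integrable_bounded_measurable bounded_measurable_mdp_intros)
  have "f (P \<omega> s) * next_mean \<pi> (P \<omega>) s (\<lambda>y. c y * (V \<omega> y - Vbar y))
      = (\<Sum>a\<in>UNIV. \<Sum>y\<in>UNIV. (\<pi> s a * c y) * (f (P \<omega> s) * P \<omega> s a y * (V \<omega> y - Vbar y)))" for \<omega>
    by (simp add: next_mean_def sum_distrib_left ac_simps)
  then show ?thesis
    by (simp add: Bochner_Integration.integral_sum int
        integral_row_times_deviation[OF indep acyclic not_terminal f])
qed

lemma integral_next_cov_deviation:
  assumes indep: "indep_transitions M P" and acyclic: "acyclic_mdp M P"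
    and not_terminal: "\<not> terminal_state M P s"
  shows "(\<integral>\<omega>. next_cov \<pi> (P \<omega>) s Vbar (\<lambda>y. V \<omega> y - Vbar y) \<partial>M) = 0"
proof -
  define mean_row where "mean_row row = next_mean \<pi> (\<lambda>_. row) s Vbar" for row :: "'a \<Rightarrow> 's \<Rightarrow> real"
  have mean_row: "mean_row (P \<omega> s) = next_mean \<pi> (P \<omega>) s Vbar" for \<omega>
    by (simp add: mean_row_def next_mean_def)
  have "mean_row \<in> borel_measurable row_space"
    unfolding mean_row_def next_mean_def using measurable_row_entry by measurable
  moreover have "bounded_measurable M (\<lambda>\<omega>. mean_row (P \<omega> s))"
    unfolding mean_row by (rule bounded_measurable_next_mean[OF transition measurable_entry policy])
  ultimately have product:
    "(\<integral>\<omega>. next_mean \<pi> (P \<omega>) s Vbar * next_mean \<pi> (P \<omega>) s (\<lambda>y. V \<omega> y - Vbar y) \<partial>M) = 0"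
    using integral_row_times_next_mean_deviation[where c = "\<lambda>_. 1", OF indep acyclic not_terminal]
    by (simp add: mean_row [symmetric])
  have joint: "(\<integral>\<omega>. next_mean \<pi> (P \<omega>) s (\<lambda>y. Vbar y * (V \<omega> y - Vbar y)) \<partial>M) = 0"
    using integral_row_times_next_mean_deviation[where f = "\<lambda>_. 1", OF indep acyclic not_terminal]
    by (simp add: bounded_measurable_const)
  have "(\<integral>\<omega>. next_cov \<pi> (P \<omega>) s Vbar (\<lambda>y. V \<omega> y - Vbar y) \<partial>M)
      = (\<integral>\<omega>. next_mean \<pi> (P \<omega>) s (\<lambda>y. Vbar y * (V \<omega> y - Vbar y))
           - next_mean \<pi> (P \<omega>) s Vbar * next_mean \<pi> (P \<omega>) s (\<lambda>y. V \<omega> y - Vbar y) \<partial>M)"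
    by (intro Bochner_Integration.integral_cong refl)
       (simp add: next_cov_eq sum_policy_transition[OF transition policy])
  also have "\<dots> = 0"
    using joint product
    by (simp add: integrable_bounded_measurable bounded_measurable_mdp_intros next_mean_def)
  finally show ?thesis .
qed

lemma g_t_nonneg:
  assumes indep: "indep_transitions M P" and acyclic: "acyclic_mdp M P"
  shows "0 \<le> g_t M P r \<gamma> \<pi> s"
proof (cases "terminal_state M P s")
  case True
  then have "g_t M P r \<gamma> \<pi> s = (\<integral>\<omega>. 0 \<partial>M)"
    unfolding g_t_def
    by (intro Bochner_Integration.integral_cong refl)
       (simp add: next_var_terminal[OF transition policy] terminal_state_def)
  then show ?thesis by simp
next
  case False
  have "next_var \<pi> (P \<omega>) s (V \<omega>) - next_var \<pi> (P \<omega>) s Vbar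
      = next_var \<pi> (P \<omega>) s (\<lambda>y. V \<omega> y - Vbar y) + 2 * next_cov \<pi> (P \<omega>) s Vbar (\<lambda>y. V \<omega> y - Vbar y)"
    for \<omega>
    using next_var_add[of \<pi> "P \<omega>" s Vbar "\<lambda>y. V \<omega> y - Vbar y"] by simp
  then have "g_t M P r \<gamma> \<pi> s = (\<integral>\<omega>. next_var \<pi> (P \<omega>) s (\<lambda>y. V \<omega> y - Vbar y)
      + 2 * next_cov \<pi> (P \<omega>) s Vbar (\<lambda>y. V \<omega> y - Vbar y) \<partial>M)"
    by (simp add: g_t_def)
  also have "\<dots> = (\<integral>\<omega>. next_var \<pi> (P \<omega>) s (\<lambda>y. V \<omega> y - Vbar y) \<partial>M)"
    using integral_next_cov_deviation[OF indep acyclic False]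
    unfolding next_var_def next_cov_def next_mean_def
    by (simp add: integrable_bounded_measurable bounded_measurable_mdp_intros)
  also have "0 \<le> \<dots>"
    by (intro Bochner_Integration.integral_nonneg next_var_nonneg transition policy)
  finally show ?thesis .
qed

end

theorem theorem2:
  fixes M :: "'w measure"
    and P :: "'w \<Rightarrow> 's::finite \<Rightarrow> 'a::finite \<Rightarrow> 's \<Rightarrow> real"
    and r :: "'s \<Rightarrow> 'a \<Rightarrow> real"
    and \<gamma> :: real
    and \<pi> :: "'s \<Rightarrow> 'a \<Rightarrow> real"
    and s :: 's
  assumes "prob_space M"
    and "0 \<le> \<gamma>" and "\<gamma> < 1"
    and "\<And>\<omega>. \<omega> \<in> space M \<Longrightarrow> is_transition (P \<omega>)"
    and "\<And>x a y. (\<lambda>\<omega>. P \<omega> x a y) \<in> borel_measurable M"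
    and "is_policy \<pi>"
    and A1: "indep_transitions M P"
    and A2: "acyclic_mdp M P"
  shows "u_t M P r \<gamma> \<pi> s = w_t M P r \<gamma> \<pi> s - g_t M P r \<gamma> \<pi> s
     \<and> g_t M P r \<gamma> \<pi> s \<ge> 0
     \<and> u_t M P r \<gamma> \<pi> s \<le> w_t M P r \<gamma> \<pi> s"
proof -
  interpret posterior_mdp M P r \<gamma> \<pi>
    using assms by (intro posterior_mdp.intro posterior_mdp_axioms.intro) auto
  show ?thesis
    using u_t_eq_w_t_minus_g_t g_t_nonneg[OF A1 A2] by simp
qed

end
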